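(* Assume there exist covering templates $\mathbf x^{(1)},\dots,\mathbf x^{(M)}\in\mathbb R^s$ and representation functions $f_{\theta_1},\dots,f_{\theta_M}$ such that the matrix $F\in\mathbb R^{M\times M}$, $F_{i,d}=f_{\theta_d}(\mathbf x^{(i)})$, has pairwise distinct rows and has a column that is constant and non-zero (i.e. some $d$ and $c\neq0$ with $f_{\theta_d}(\mathbf x^{(i)})=c$ for all $i\in[M]$). Consider the shallow fully-connected network with ReLU activation whose $y$-th score function is $$h^{S(fc)}_y(X)=\sum_{z=1}^Z a^y_z\max\Big\{0,\sum_{i=1}^N\sum_{d=1}^M A^z_{i,d}\,f_{\theta_d}(\mathbf x_i)\Big\},\qquad A^z\in\mathbb R^{N\times M},\ \mathbf a^y\in\mathbb R^Z.$$ Then this network is universal: for every tensor $\mathcal A\in\mathbb R^{M\times\cdots\times M}$ of order $N$ there exist $Z$ and weights $\{A^z\}_{z\in[Z]}$, $\mathbf a^y$ such that $\mathcal A(h^{S(fc)}_y)=\mathcal A$ (in fact $Z\ge M^N$ suffices).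
   Context: Inputs are $X=(\mathbf x_1,\dots,\mathbf x_N)\in(\mathbb R^s)^N$. For templates $\mathbf x^{(1)},\dots,\mathbf x^{(M)}\in\mathbb R^s$, the grid tensor of $h:(\mathbb R^s)^N\to\mathbb R$ is the order-$N$ tensor with $\mathcal A(h)_{d_1,\dots,d_N}=h(\mathbf x^{(d_1)},\dots,\mathbf x^{(d_N)})$. Templates are covering if score functions are identified whenever their grid tensors coincide; a network is universal if (w.r.t. covering templates) every tensor is the grid tensor of one of its score functions. *)

theory Defs
  imports "HOL-Analysis.Analysis"
begin

text \<open>Conventions: indices are 0-based. Inputs X = (x_1..x_N) are functions
  nat => real^'s (only positions i < N are used). An order-N tensor with mode sizes M
  is a function on index lists ds with length ds = N and all entries < M.\<close>

definition score_fc ::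
  "nat \<Rightarrow> nat \<Rightarrow> (nat \<Rightarrow> 'x \<Rightarrow> real) \<Rightarrow> nat \<Rightarrow>
   (nat \<Rightarrow> nat \<Rightarrow> nat \<Rightarrow> real) \<Rightarrow> (nat \<Rightarrow> real) \<Rightarrow> (nat \<Rightarrow> 'x) \<Rightarrow> real" where
  "score_fc N M f Z A a X =
     (\<Sum>z<Z. a z * max 0 (\<Sum>i<N. \<Sum>d<M. A z i d * f d (X i)))"

definition grid_tensor :: "(nat \<Rightarrow> 'x) \<Rightarrow> ((nat \<Rightarrow> 'x) \<Rightarrow> real) \<Rightarrow> nat list \<Rightarrow> real" where
  "grid_tensor tmpl h ds = h (\<lambda>i. tmpl (ds ! i))"

definition tensor_index :: "nat \<Rightarrow> nat \<Rightarrow> nat list \<Rightarrow> bool" where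
  "tensor_index N M ds \<longleftrightarrow> length ds = N \<and> set ds \<subseteq> {..<M}"

end

theory Submission imports Defs begin

text \<open>Choose linear weights so that the pre-activation s(X) of the first layer takes pairwise
  distinct values on the M^N grid inputs; this is possible because the rows of F are distinct,
  so each pair of grid inputs is separated by a nonzero difference vector, and finitely many
  hyperplanes cannot cover the weight space. The constant column turns one weight into a bias,
  so each hidden unit computes max(0, s(X) - t_z), and a sum of at most M^N such ramps
  interpolates any values at M^N distinct points.\<close>

lemma relu_interpolation:
  fixes P :: "real set" and g :: "real \<Rightarrow> real"
  assumes "finite P" and "card P \<le> K"
  shows "\<exists>t c. \<forall>x\<in>P. (\<Sum>k<K. c k * max 0 (x - t k)) = g x"
  using assms
proof (induction P arbitrary: K g rule: finite_linorder_max_induct)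
  case empty
  then show ?case by simp
next
  case (insert b P)
  obtain K' where K: "K = Suc K'" and card_P: "card P \<le> K'"
    using insert.prems insert.hyps by (cases K) auto
  obtain t c where fit: "\<forall>x\<in>P. (\<Sum>k<K'. c k * max 0 (x - t k)) = g x"
    using insert.IH[OF card_P] by blast
  \<comment> \<open>A new ramp starting between max P and b vanishes on P and can be scaled to fit g b.\<close>
  define t0 where "t0 = Max (insert (b - 1) P)"
  have "t0 < b" unfolding t0_def using insert.hyps by (subst Max_less_iff) auto
  have below_t0: "x \<le> t0" if "x \<in> P" for x unfolding t0_def using insert.hyps that by auto
  define c0 where "c0 = (g b - (\<Sum>k<K'. c k * max 0 (b - t k))) / (b - t0)"
  have extend: "(\<Sum>k<K. (c(K' := c0)) k * max 0 (x - (t(K' := t0)) k))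
      = (\<Sum>k<K'. c k * max 0 (x - t k)) + c0 * max 0 (x - t0)" for x
    by (simp add: K)
  have "\<forall>x\<in>insert b P. (\<Sum>k<K. (c(K' := c0)) k * max 0 (x - (t(K' := t0)) k)) = g x"
    unfolding extend using fit below_t0 \<open>t0 < b\<close> by (auto simp: c0_def)
  then show ?case by blast
qed

lemma ex_functional_nonvanishing:
  fixes S :: "('j \<Rightarrow> real) set"
  assumes "finite J" and "finite S" and "\<forall>G\<in>S. \<exists>j\<in>J. G j \<noteq> 0"
  shows "\<exists>W. \<forall>G\<in>S. (\<Sum>j\<in>J. W j * G j) \<noteq> 0"
  using assms(2,3)
proof (induction S rule: finite_induct)
  case empty
  then show ?case by simp
next
  case (insert G S)
  then obtain W where W: "\<forall>H\<in>S. (\<Sum>j\<in>J. W j * H j) \<noteq> 0" by auto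
  obtain j0 where "j0 \<in> J" and "G j0 \<noteq> 0" using insert.prems by auto
  define pair where "pair V H = (\<Sum>j\<in>J. V j * H j)" for V H :: "'j \<Rightarrow> real"
  define W' where "W' u j = W j + (if j = j0 then u else 0)" for u j
  have pair_W': "pair (W' u) H = pair W H + u * H j0" for u H
    using \<open>finite J\<close> \<open>j0 \<in> J\<close>
    by (simp add: pair_def W'_def distrib_right sum.distrib if_distrib[of "\<lambda>x. x * _"] cong: if_cong)
  \<comment> \<open>Each constraint pair (W' u) H \<noteq> 0 excludes at most one value of u.\<close>
  define bad where "bad = insert (- pair W G / G j0) ((\<lambda>H. - pair W H / H j0) ` S)"
  have "finite bad" unfolding bad_def using insert.hyps by simp
  then obtain u where "u \<notin> bad" using ex_new_if_finite[OF infinite_UNIV_char_0] by blast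
  have "pair (W' u) H \<noteq> 0" if "H \<in> insert G S" for H
  proof
    assume zero: "pair (W' u) H = 0"
    have "H j0 \<noteq> 0"
    proof
      assume "H j0 = 0"
      then have "pair W H = 0" using zero by (simp add: pair_W')
      then show False using that W \<open>G j0 \<noteq> 0\<close> \<open>H j0 = 0\<close> by (auto simp: pair_def)
    qed
    then have "u = - pair W H / H j0" using zero by (simp add: pair_W' field_simps)
    then show False using \<open>u \<notin> bad\<close> that by (auto simp: bad_def)
  qed
  then show ?case unfolding pair_def by blast
qed

lemma ex_functional_inj_on:
  fixes \<phi> :: "'a \<Rightarrow> 'j \<Rightarrow> real"
  assumes "finite J" and "finite X"
    and separating: "\<forall>x\<in>X. \<forall>y\<in>X. x \<noteq> y \<longrightarrow> (\<exists>j\<in>J. \<phi> x j \<noteq> \<phi> y j)"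
  shows "\<exists>W. inj_on (\<lambda>x. \<Sum>j\<in>J. W j * \<phi> x j) X"
proof -
  define S where "S = (\<lambda>(x, y) j. \<phi> x j - \<phi> y j) ` {p \<in> X \<times> X. fst p \<noteq> snd p}"
  have "finite S" unfolding S_def using \<open>finite X\<close> by simp
  moreover have "\<forall>G\<in>S. \<exists>j\<in>J. G j \<noteq> 0" unfolding S_def using separating by auto
  ultimately obtain W where W: "\<forall>G\<in>S. (\<Sum>j\<in>J. W j * G j) \<noteq> 0"
    using ex_functional_nonvanishing[OF \<open>finite J\<close>] by blast
  have "x = y" if "x \<in> X" "y \<in> X" "(\<Sum>j\<in>J. W j * \<phi> x j) = (\<Sum>j\<in>J. W j * \<phi> y j)" for x y
  proof (rule ccontr)
    assume "x \<noteq> y"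
    then have "(\<lambda>j. \<phi> x j - \<phi> y j) \<in> S" unfolding S_def using that by force
    then show False
      using W that(3) by (force simp: right_diff_distrib sum_subtractf)
  qed
  then show ?thesis by (auto intro: inj_onI)
qed

lemma tensor_indices_eq_lists: "{ds. tensor_index N M ds} = {ds. set ds \<subseteq> {..<M} \<and> length ds = N}"
  by (auto simp: tensor_index_def)

lemma finite_tensor_indices: "finite {ds. tensor_index N M ds}"
  unfolding tensor_indices_eq_lists by (rule finite_lists_length_eq) simp

lemma card_tensor_indices: "card {ds. tensor_index N M ds} = M ^ N"
  unfolding tensor_indices_eq_lists by (simp add: card_lists_length_eq)

lemma tensor_indices_separated:
  assumes rows_distinct: "\<forall>i<M. \<forall>j<M. i \<noteq> j \<longrightarrow> (\<exists>d<M. f d (tmpl i) \<noteq> f d (tmpl j))"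
    and "tensor_index N M ds" and "tensor_index N M es" and "ds \<noteq> es"
  shows "\<exists>(i, d) \<in> {..<N} \<times> {..<M}. f d (tmpl (ds ! i)) \<noteq> f d (tmpl (es ! i))"
proof -
  have len: "length ds = N" "length es = N" and "set ds \<subseteq> {..<M}" "set es \<subseteq> {..<M}"
    using assms(2,3) by (auto simp: tensor_index_def)
  obtain i where "i < N" and differ: "ds ! i \<noteq> es ! i"
    using \<open>ds \<noteq> es\<close> len by (auto simp: list_eq_iff_nth_eq)
  have "ds ! i \<in> set ds" "es ! i \<in> set es" using len \<open>i < N\<close> by simp_all
  then have "ds ! i < M" "es ! i < M" using \<open>set ds \<subseteq> {..<M}\<close> \<open>set es \<subseteq> {..<M}\<close> by auto
  then obtain d where "d < M" "f d (tmpl (ds ! i)) \<noteq> f d (tmpl (es ! i))"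
    using rows_distinct differ by blast
  then show ?thesis using \<open>i < N\<close> by (intro bexI[of _ "(i, d)"]) auto
qed

lemma ex_grid_functional_inj_on:
  fixes f :: "nat \<Rightarrow> 'x \<Rightarrow> real"
  assumes rows_distinct: "\<forall>i<M. \<forall>j<M. i \<noteq> j \<longrightarrow> (\<exists>d<M. f d (tmpl i) \<noteq> f d (tmpl j))"
  shows "\<exists>W. inj_on (\<lambda>ds. \<Sum>i<N. \<Sum>d<M. W i d * f d (tmpl (ds ! i))) {ds. tensor_index N M ds}"
proof -
  obtain W where "inj_on (\<lambda>ds. \<Sum>(i, d)\<in>{..<N} \<times> {..<M}. W (i, d) * f d (tmpl (ds ! i)))
      {ds. tensor_index N M ds}"
    using ex_functional_inj_on[of "{..<N} \<times> {..<M}" "{ds. tensor_index N M ds}"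
        "\<lambda>ds (i, d). f d (tmpl (ds ! i))"]
      tensor_indices_separated[of M f tmpl N] rows_distinct finite_tensor_indices
    by (auto simp: case_prod_beta')
  moreover have "(\<lambda>ds. \<Sum>(i, d)\<in>{..<N} \<times> {..<M}. W (i, d) * f d (tmpl (ds ! i)))
      = (\<lambda>ds. \<Sum>i<N. \<Sum>d<M. W (i, d) * f d (tmpl (ds ! i)))"
    by (intro ext) (rule sum.cartesian_product[symmetric])
  ultimately show ?thesis by (intro exI[of _ "curry W"]) simp
qed

lemma score_fc_bias_via_constant_feature:
  assumes "0 < N" and "d0 < M" and "f d0 (X 0) = c" and "c \<noteq> 0"
  shows "score_fc N M f Z (\<lambda>z i d. W i d - (if i = 0 \<and> d = d0 then t z / c else 0)) a X
       = (\<Sum>z<Z. a z * max 0 ((\<Sum>i<N. \<Sum>d<M. W i d * f d (X i)) - t z))"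
proof -
  have "(\<Sum>i<N. \<Sum>d<M. if i = 0 \<and> d = d0 then v else 0)
      = (\<Sum>i<N. if i = 0 then (\<Sum>d<M. if d = d0 then v else 0) else 0)" for v :: real
    by (intro sum.cong) auto
  then have "(\<Sum>i<N. \<Sum>d<M. (W i d - (if i = 0 \<and> d = d0 then t z / c else 0)) * f d (X i))
      = (\<Sum>i<N. \<Sum>d<M. W i d * f d (X i)) - t z" for z
    using assms
    by (simp add: left_diff_distrib sum_subtractf if_distrib[of "\<lambda>x. x * _"] cong: if_cong)
  then show ?thesis by (simp add: score_fc_def)
qed

theorem claim7:
  fixes tmpl :: "nat \<Rightarrow> real ^ 's" and f :: "nat \<Rightarrow> real ^ 's \<Rightarrow> real"
    and M N :: nat
  assumes N_pos: "N \<ge> 1"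
    and rows_distinct: "\<forall>i<M. \<forall>j<M. i \<noteq> j \<longrightarrow> (\<exists>d<M. f d (tmpl i) \<noteq> f d (tmpl j))"
    and const_col: "\<exists>d<M. \<exists>c::real. c \<noteq> 0 \<and> (\<forall>i<M. f d (tmpl i) = c)"
  shows "\<forall>T :: nat list \<Rightarrow> real. \<forall>Z \<ge> M ^ N. \<exists>A a.
           \<forall>ds. tensor_index N M ds \<longrightarrow>
             grid_tensor tmpl (score_fc N M f Z A a) ds = T ds"
proof (intro allI impI)
  fix T :: "nat list \<Rightarrow> real" and Z :: nat
  assume "M ^ N \<le> Z"
  obtain d0 c where "d0 < M" "c \<noteq> 0" and const: "\<forall>i<M. f d0 (tmpl i) = c"
    using const_col by blast
  define I where "I = {ds. tensor_index N M ds}"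
  obtain W where inj: "inj_on (\<lambda>ds. \<Sum>i<N. \<Sum>d<M. W i d * f d (tmpl (ds ! i))) I"
    using ex_grid_functional_inj_on[of M f tmpl N] rows_distinct unfolding I_def by blast
  define s where "s ds = (\<Sum>i<N. \<Sum>d<M. W i d * f d (tmpl (ds ! i)))" for ds
  have "card (s ` I) \<le> Z"
    using card_image_le[of I s] finite_tensor_indices card_tensor_indices \<open>M ^ N \<le> Z\<close>
    by (fastforce simp: I_def)
  then obtain t a where ramps: "\<forall>x\<in>s ` I. (\<Sum>z<Z. a z * max 0 (x - t z)) = T (the_inv_into I s x)"
    using relu_interpolation[of "s ` I" Z "\<lambda>x. T (the_inv_into I s x)"] finite_tensor_indices
    by (auto simp: I_def)
  define A where "A z i d = W i d - (if i = 0 \<and> d = d0 then t z / c else 0)" for z i d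
  have "grid_tensor tmpl (score_fc N M f Z A a) ds = T ds" if "ds \<in> I" for ds
  proof -
    have "ds ! 0 \<in> set ds" using that N_pos by (simp add: I_def tensor_index_def)
    then have "f d0 (tmpl (ds ! 0)) = c" using that const by (auto simp: I_def tensor_index_def)
    then have "grid_tensor tmpl (score_fc N M f Z A a) ds = (\<Sum>z<Z. a z * max 0 (s ds - t z))"
      unfolding grid_tensor_def s_def A_def
      using score_fc_bias_via_constant_feature[of N d0 M f "\<lambda>i. tmpl (ds ! i)"] N_pos \<open>d0 < M\<close> \<open>c \<noteq> 0\<close>
      by simp
    also have "\<dots> = T ds" using ramps that the_inv_into_f_f[OF inj[folded s_def]] by simp
    finally show ?thesis .
  qed
  then show "\<exists>A a. \<forall>ds. tensor_index N M ds \<longrightarrow> grid_tensor tmpl (score_fc N M f Z A a) ds = T ds"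
    unfolding I_def by blast
qed

end
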